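(* Suppose a strategy is relative growth optimal for investor $m$, and consider any feasible strategy profile and initial wealth $y_0\in\mathbb{R}^M_{++}$ in which investor $m$ uses it, with wealth process $Y$. Then investor $m$ survives in the sense that $\inf_{t\ge0}r^m_t>0$ a.s., and for every investor $k$, $$\limsup_{t\to\infty}\frac1t\ln Y^m_t\ \ge\ \limsup_{t\to\infty}\frac1t\ln Y^k_t\quad\text{a.s.}$$
   Context: Setting: $(\Omega,\mathcal{F},\mathbb{F}=(\mathcal{F}_t)_{t\ge0},\mathbb{P})$ filtered probability space with usual conditions, $\mathcal{P}$ predictable $\sigma$-algebra. $|x|=\sum_n|x^n|$; for $x\in\mathbb{R}^{MN}$, $x^m=(x^{m,n})_n$, $x^{\cdot,n}=(x^{m,n})_m$. $M\ge2$ investors, $N\ge1$ assets. Payoff process $X$: adapted, nondecreasing, càdlàg, $\mathbb{R}^N_+$-valued, $X_0=0$; $X^c_t=X_t-\sum_{0<s\le t}\Delta X_s$; $\nu$ the compensator of its jump measure; $G_t=|X^c_t|+(|x|\wedge1)*\nu_t$. Strategies: $D$ = càdlàg $y\colon\mathbb{R}_+\to\mathbb{R}^M_+$, $\mathcal{D}_t=\sigma(y_u,u\le t)$, $E=\Omega\times D$, $\mathcal{E}_t=\mathcal{F}_t\otimes\mathcal{D}_t$, $\mathcal{P}^E$ the $\sigma$-algebra on $E\times\mathbb{R}_+$ generated by measurable functions left-continuous in $t$ and $\mathcal{E}_t$-measurable for fixed $t$. A strategy is a $\mathcal{P}^E$-measurable $\boldsymbol{L}_t(\omega,y)\in\mathbb{R}^N_+$,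 $\boldsymbol{L}_0=0$, nondecreasing càdlàg in $t$. Feasibility: for predictable nondecreasing càdlàg $H$ with $G\ll H$, $dL/dH$ is a predictable version of the Lebesgue derivative of the measure $\mathbb{P}\otimes L(A)=\mathbb{E}\int\mathbb{1}_A\,dL$ w.r.t. $\mathbb{P}\otimes H$ on $\mathcal{P}$. A profile $(\boldsymbol{L}^1,\dots,\boldsymbol{L}^M)$ and $y_0\in\mathbb{R}^M_{++}$ are feasible if there is a unique (up to indistinguishability) nonnegative càdlàg adapted $\mathbb{R}^M_+$-valued process $Y$ such that (1) for each $m$, a.s. for all $t$, $Y^m_t=y^m_0-|L^m_t|+\sum_n\int_0^t\frac{l^{m,n}_s}{|l^{\cdot,n}_s|}dX^n_s$ with $L^m_t(\omega)=\boldsymbol{L}^m_t(\omega,Y(\omega))$, $l^{m,n}=dL^{m,n}/dH$, $0/0=0$; (2) if $Y^m_t(\omega)=0$ or $Y^m_{t-}(\omega)=0$, then $L^m_s(\omega)=L^m_{t-}(\omega)$ and $Y^m_s(\omega)=0$ for all $s\ge t$. Relative wealth: $r^m_t=Y^m_t/|Y_t|$ ($:=0$ if $|Y_t|=0$). A strategy is relative growth optimal for investor $m$ if for any feasible initial wealth and strategy profile in which investor $m$ uses it, $Y^m_t>0$ for all $t\ge0$ and $\ln r^m$ is a submartingale. In the growth-rate inequality, $\ln 0:=-\infty$. *)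

theory Defs
  imports "HOL-Probability.Probability"
begin

text \<open>Time is the real line; only t \<ge> 0 is meaningful. Paths are extended to
negative times by their value at 0.\<close>

definition ext0 :: "(real \<Rightarrow> 'b) \<Rightarrow> real \<Rightarrow> 'b" where
  "ext0 f = (\<lambda>t. f (max 0 t))"

definition lft :: "(real \<Rightarrow> real) \<Rightarrow> real \<Rightarrow> real" where
  "lft f t = (if t \<le> 0 then f 0 else Lim (at_left t) f)"

definition cadlag :: "(real \<Rightarrow> real) \<Rightarrow> bool" where
  "cadlag f \<longleftrightarrow> (\<forall>t\<ge>0. continuous (at_right t) f) \<and>
                 (\<forall>t>0. \<exists>l. (f \<longlongrightarrow> l) (at_left t))"

text \<open>Lebesgue--Stieltjes measure dF on (0,\<infinity>) of a path F on [0,\<infinity>).\<close>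
definition LS :: "(real \<Rightarrow> real) \<Rightarrow> real measure" where
  "LS f = interval_measure (ext0 f)"

definition l1 :: "('i::finite \<Rightarrow> real) \<Rightarrow> real" where
  "l1 x = (\<Sum>i\<in>UNIV. \<bar>x i\<bar>)"

definition usual_filtration :: "'a measure \<Rightarrow> (real \<Rightarrow> 'a measure) \<Rightarrow> bool" where
  "usual_filtration M F \<longleftrightarrow>
     complete_measure M \<and>
     (\<forall>t\<ge>0. subalgebra M (F t)) \<and>
     (\<forall>s t. 0 \<le> s \<longrightarrow> s \<le> t \<longrightarrow> sets (F s) \<subseteq> sets (F t)) \<and>
     (\<forall>t\<ge>0. sets (F t) = (\<Inter>u\<in>{t<..}. sets (F u))) \<and>
     null_sets M \<subseteq> sets (F 0)"

definition lc_adapted :: "'s measure \<Rightarrow> (real \<Rightarrow> 's measure) \<Rightarrow> ('s \<times> real \<Rightarrow> real) set" where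
  "lc_adapted B G = {f. f \<in> borel_measurable (B \<Otimes>\<^sub>M restrict_space borel {0..}) \<and>
      (\<forall>t\<ge>0. (\<lambda>x. f (x, t)) \<in> borel_measurable (G t)) \<and>
      (\<forall>x\<in>space B. \<forall>t>0. continuous (at_left t) (\<lambda>s. f (x, s)))}"

definition pred_sa :: "'s measure \<Rightarrow> (real \<Rightarrow> 's measure) \<Rightarrow> ('s \<times> real) measure" where
  "pred_sa B G = sigma (space B \<times> {0..})
     {f -` A \<inter> (space B \<times> {0..}) | f A. f \<in> lc_adapted B G \<and> A \<in> sets (borel :: real measure)}"

definition Dset :: "(real \<Rightarrow> 'm \<Rightarrow> real) set" where
  "Dset = {y. (\<forall>t. y t = y (max 0 t)) \<and> (\<forall>t k. 0 \<le> y t k) \<and> (\<forall>k. cadlag (\<lambda>t. y t k))}"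

definition Dmeas :: "real \<Rightarrow> (real \<Rightarrow> 'm \<Rightarrow> real) measure" where
  "Dmeas t = sigma Dset
     {(\<lambda>y. y u k) -` A \<inter> Dset | u k A. 0 \<le> u \<and> u \<le> t \<and> A \<in> sets (borel :: real measure)}"

definition Dall :: "(real \<Rightarrow> 'm \<Rightarrow> real) measure" where
  "Dall = sigma Dset
     {(\<lambda>y. y u k) -` A \<inter> Dset | u k A. 0 \<le> u \<and> A \<in> sets (borel :: real measure)}"

definition Pred :: "'a measure \<Rightarrow> (real \<Rightarrow> 'a measure) \<Rightarrow> ('a \<times> real) measure" where
  "Pred M F = pred_sa M F"

definition PredE :: "'a measure \<Rightarrow> (real \<Rightarrow> 'a measure) \<Rightarrow>
    (('a \<times> (real \<Rightarrow> 'm \<Rightarrow> real)) \<times> real) measure" where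
  "PredE M F = pred_sa (M \<Otimes>\<^sub>M Dall) (\<lambda>t. F t \<Otimes>\<^sub>M Dmeas t)"

type_synonym ('a, 'm, 'n) strategy = "'a \<times> (real \<Rightarrow> 'm \<Rightarrow> real) \<Rightarrow> real \<Rightarrow> 'n \<Rightarrow> real"

definition is_strategy :: "'a measure \<Rightarrow> (real \<Rightarrow> 'a measure) \<Rightarrow> ('a, 'm, 'n) strategy \<Rightarrow> bool" where
  "is_strategy M F L \<longleftrightarrow>
     (\<forall>n. (\<lambda>(e, t). L e t n) \<in> borel_measurable (PredE M F)) \<and>
     (\<forall>e\<in>space M \<times> Dset. \<forall>n. L e 0 n = 0 \<and> (\<forall>t\<ge>0. 0 \<le> L e t n) \<and>
        mono_on {0..} (\<lambda>t. L e t n) \<and> cadlag (\<lambda>t. L e t n))"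

definition payoff_process :: "'a measure \<Rightarrow> (real \<Rightarrow> 'a measure) \<Rightarrow> ('a \<Rightarrow> real \<Rightarrow> 'n \<Rightarrow> real) \<Rightarrow> bool" where
  "payoff_process M F X \<longleftrightarrow>
     (\<forall>t\<ge>0. \<forall>n. (\<lambda>\<omega>. X \<omega> t n) \<in> borel_measurable (F t)) \<and>
     (\<forall>\<omega>\<in>space M. \<forall>n. X \<omega> 0 n = 0 \<and> (\<forall>t\<ge>0. 0 \<le> X \<omega> t n) \<and>
        mono_on {0..} (\<lambda>t. X \<omega> t n) \<and> cadlag (\<lambda>t. X \<omega> t n))"

definition jump :: "('a \<Rightarrow> real \<Rightarrow> 'n \<Rightarrow> real) \<Rightarrow> 'a \<Rightarrow> real \<Rightarrow> 'n \<Rightarrow> real" where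
  "jump X \<omega> s = (\<lambda>n. X \<omega> s n - lft (\<lambda>u. X \<omega> u n) s)"

definition Xcont :: "('a \<Rightarrow> real \<Rightarrow> 'n \<Rightarrow> real) \<Rightarrow> 'a \<Rightarrow> real \<Rightarrow> 'n \<Rightarrow> real" where
  "Xcont X \<omega> t n = X \<omega> t n - (\<Sum>\<^sub>\<infinity>s\<in>{0<..t}. jump X \<omega> s n)"

definition int_jump :: "('a \<Rightarrow> real \<Rightarrow> 'n \<Rightarrow> real) \<Rightarrow> (('a \<times> real) \<times> ('n \<Rightarrow> real) \<Rightarrow> ennreal)
     \<Rightarrow> 'a \<Rightarrow> real set \<Rightarrow> ennreal" where
  "int_jump X W \<omega> I = (\<Sum>\<^sub>\<infinity>s\<in>{s\<in>I. \<exists>n. jump X \<omega> s n \<noteq> 0}. W ((\<omega>, s), jump X \<omega> s))"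

definition int_rm :: "('a \<Rightarrow> (real \<times> ('n \<Rightarrow> real)) measure) \<Rightarrow> (('a \<times> real) \<times> ('n \<Rightarrow> real) \<Rightarrow> ennreal)
     \<Rightarrow> 'a \<Rightarrow> real set \<Rightarrow> ennreal" where
  "int_rm \<nu> W \<omega> I = (\<integral>\<^sup>+ z. indicator I (fst z) * W ((\<omega>, fst z), snd z) \<partial>(\<nu> \<omega>))"

definition jump_compensator :: "'a measure \<Rightarrow> (real \<Rightarrow> 'a measure) \<Rightarrow> ('a \<Rightarrow> real \<Rightarrow> 'n::finite \<Rightarrow> real)
     \<Rightarrow> ('a \<Rightarrow> (real \<times> ('n \<Rightarrow> real)) measure) \<Rightarrow> bool" where
  "jump_compensator M F X \<nu> \<longleftrightarrow>
     (\<forall>\<omega>\<in>space M. sets (\<nu> \<omega>) = sets (borel :: (real \<times> ('n \<Rightarrow> real)) measure)) \<and>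
     (\<forall>W \<in> borel_measurable (Pred M F \<Otimes>\<^sub>M (borel :: ('n \<Rightarrow> real) measure)).
        (\<lambda>(\<omega>, t). int_rm \<nu> W \<omega> {0<..t}) \<in> borel_measurable (Pred M F) \<and>
        (\<integral>\<^sup>+ \<omega>. int_jump X W \<omega> {0<..} \<partial>M) = (\<integral>\<^sup>+ \<omega>. int_rm \<nu> W \<omega> {0<..} \<partial>M))"

definition Gproc :: "('a \<Rightarrow> real \<Rightarrow> 'n::finite \<Rightarrow> real) \<Rightarrow> ('a \<Rightarrow> (real \<times> ('n \<Rightarrow> real)) measure)
     \<Rightarrow> 'a \<Rightarrow> real \<Rightarrow> real" where
  "Gproc X \<nu> \<omega> t = l1 (Xcont X \<omega> t) +
     enn2real (int_rm \<nu> (\<lambda>(_, x). ennreal (min (l1 x) 1)) \<omega> {0<..t})"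

definition admissible_H :: "'a measure \<Rightarrow> (real \<Rightarrow> 'a measure) \<Rightarrow> ('a \<Rightarrow> real \<Rightarrow> 'n::finite \<Rightarrow> real)
     \<Rightarrow> ('a \<Rightarrow> (real \<times> ('n \<Rightarrow> real)) measure) \<Rightarrow> ('a \<Rightarrow> real \<Rightarrow> real) \<Rightarrow> bool" where
  "admissible_H M F X \<nu> H \<longleftrightarrow>
     (\<lambda>(\<omega>, t). H \<omega> t) \<in> borel_measurable (Pred M F) \<and>
     (\<forall>\<omega>\<in>space M. mono_on {0..} (H \<omega>) \<and> cadlag (H \<omega>)) \<and>
     (AE \<omega> in M. absolutely_continuous (LS (H \<omega>)) (LS (Gproc X \<nu> \<omega>)))"

definition PxZ :: "'a measure \<Rightarrow> ('a \<Rightarrow> real \<Rightarrow> real) \<Rightarrow> ('a \<times> real) set \<Rightarrow> ('a \<times> real \<Rightarrow> ennreal) \<Rightarrow> ennreal" where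
  "PxZ M Z A g = (\<integral>\<^sup>+ \<omega>. (\<integral>\<^sup>+ s. indicator A (\<omega>, s) * g (\<omega>, s) \<partial>LS (Z \<omega>)) \<partial>M)"

text \<open>f is a predictable version of the Lebesgue derivative of P \<otimes> L w.r.t. P \<otimes> H on P:
P \<otimes> L = f \<cdot> (P \<otimes> H) + (singular part), the singular part concentrated on a
(P \<otimes> H)-null predictable set.\<close>
definition leb_deriv :: "'a measure \<Rightarrow> (real \<Rightarrow> 'a measure) \<Rightarrow> ('a \<Rightarrow> real \<Rightarrow> real)
     \<Rightarrow> ('a \<Rightarrow> real \<Rightarrow> real) \<Rightarrow> ('a \<times> real \<Rightarrow> real) \<Rightarrow> bool" where
  "leb_deriv M F H L f \<longleftrightarrow>
     f \<in> borel_measurable (Pred M F) \<and> (\<forall>z. 0 \<le> f z) \<and>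
     (\<exists>S\<in>sets (Pred M F). PxZ M H S (\<lambda>_. 1) = 0 \<and>
        (\<forall>A\<in>sets (Pred M F).
           PxZ M L A (\<lambda>_. 1) = PxZ M H A (\<lambda>z. ennreal (f z)) + PxZ M L (A \<inter> S) (\<lambda>_. 1)))"

definition Lproc :: "('m \<Rightarrow> ('a, 'm, 'n) strategy) \<Rightarrow> ('a \<Rightarrow> real \<Rightarrow> 'm \<Rightarrow> real)
     \<Rightarrow> 'm \<Rightarrow> 'n \<Rightarrow> 'a \<Rightarrow> real \<Rightarrow> real" where
  "Lproc Ls Y m n \<omega> t = Ls m (\<omega>, ext0 (Y \<omega>)) t n"

definition is_wealth :: "'a measure \<Rightarrow> (real \<Rightarrow> 'a measure) \<Rightarrow> ('a \<Rightarrow> real \<Rightarrow> 'n::finite \<Rightarrow> real)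
     \<Rightarrow> ('m::finite \<Rightarrow> real) \<Rightarrow> ('m \<Rightarrow> ('a, 'm, 'n) strategy) \<Rightarrow> ('a \<Rightarrow> real \<Rightarrow> 'm \<Rightarrow> real) \<Rightarrow> bool" where
  "is_wealth M F X y0 Ls Y \<longleftrightarrow>
     (\<forall>t\<ge>0. \<forall>m. (\<lambda>\<omega>. Y \<omega> t m) \<in> borel_measurable (F t)) \<and>
     (\<forall>\<omega>\<in>space M. \<forall>m. cadlag (\<lambda>t. Y \<omega> t m) \<and> (\<forall>t\<ge>0. 0 \<le> Y \<omega> t m)) \<and>
     (\<forall>\<nu> H l. jump_compensator M F X \<nu> \<and> admissible_H M F X \<nu> H \<and>
        (\<forall>m n. leb_deriv M F H (Lproc Ls Y m n) (l m n)) \<longrightarrow>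
        (\<forall>m. AE \<omega> in M. \<forall>t\<ge>0.
           Y \<omega> t m = y0 m - (\<Sum>n\<in>UNIV. Lproc Ls Y m n \<omega> t)
             + (\<Sum>n\<in>UNIV. \<integral>s. indicator {0<..t} s *
                   (l m n (\<omega>, s) / (\<Sum>k\<in>UNIV. l k n (\<omega>, s))) \<partial>LS (\<lambda>u. X \<omega> u n)))) \<and>
     (\<forall>\<omega>\<in>space M. \<forall>m. \<forall>t\<ge>0.
        (Y \<omega> t m = 0 \<or> lft (\<lambda>u. Y \<omega> u m) t = 0) \<longrightarrow>
        (\<forall>s\<ge>t. (\<forall>n. Lproc Ls Y m n \<omega> s = lft (Lproc Ls Y m n \<omega>) t) \<and> Y \<omega> s m = 0))"

definition feasible :: "'a measure \<Rightarrow> (real \<Rightarrow> 'a measure) \<Rightarrow> ('a \<Rightarrow> real \<Rightarrow> 'n::finite \<Rightarrow> real)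
     \<Rightarrow> ('m::finite \<Rightarrow> real) \<Rightarrow> ('m \<Rightarrow> ('a, 'm, 'n) strategy) \<Rightarrow> bool" where
  "feasible M F X y0 Ls \<longleftrightarrow>
     (\<forall>m. is_strategy M F (Ls m)) \<and>
     (\<exists>Y. is_wealth M F X y0 Ls Y \<and>
        (\<forall>Y'. is_wealth M F X y0 Ls Y' \<longrightarrow> (AE \<omega> in M. \<forall>t\<ge>0. Y' \<omega> t = Y \<omega> t)))"

text \<open>Relative wealth r^m_t = Y^m_t / |Y_t| (:= 0 if |Y_t| = 0, automatic as x/0 = 0).\<close>
definition relw :: "('a \<Rightarrow> real \<Rightarrow> 'm::finite \<Rightarrow> real) \<Rightarrow> 'a \<Rightarrow> real \<Rightarrow> 'm \<Rightarrow> real" where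
  "relw Y \<omega> t m = Y \<omega> t m / (\<Sum>k\<in>UNIV. Y \<omega> t k)"

definition submartingale :: "'a measure \<Rightarrow> (real \<Rightarrow> 'a measure) \<Rightarrow> (real \<Rightarrow> 'a \<Rightarrow> real) \<Rightarrow> bool" where
  "submartingale M F Z \<longleftrightarrow>
     (\<forall>t\<ge>0. Z t \<in> borel_measurable (F t) \<and> integrable M (Z t)) \<and>
     (\<forall>s t. 0 \<le> s \<longrightarrow> s \<le> t \<longrightarrow> (AE \<omega> in M. Z s \<omega> \<le> real_cond_exp M (F s) (Z t) \<omega>))"

definition rel_growth_optimal :: "'a measure \<Rightarrow> (real \<Rightarrow> 'a measure) \<Rightarrow> ('a \<Rightarrow> real \<Rightarrow> 'n::finite \<Rightarrow> real)
     \<Rightarrow> 'm::finite \<Rightarrow> ('a, 'm, 'n) strategy \<Rightarrow> bool" where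
  "rel_growth_optimal M F X m L \<longleftrightarrow>
     is_strategy M F L \<and>
     (\<forall>y0 Ls Y. (\<forall>k. 0 < y0 k) \<and> feasible M F X y0 Ls \<and> Ls m = L \<and> is_wealth M F X y0 Ls Y \<longrightarrow>
        (AE \<omega> in M. \<forall>t\<ge>0. 0 < Y \<omega> t m) \<and>
        submartingale M F (\<lambda>t \<omega>. ln (relw Y \<omega> t m)))"

definition eln :: "real \<Rightarrow> ereal" where
  "eln x = (if 0 < x then ereal (ln x) else -\<infinity>)"

definition growth_rate :: "('a \<Rightarrow> real \<Rightarrow> 'm \<Rightarrow> real) \<Rightarrow> 'a \<Rightarrow> 'm \<Rightarrow> ereal" where
  "growth_rate Y \<omega> k = Limsup at_top (\<lambda>t::real. ereal (1 / t) * eln (Y \<omega> t k))"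

end

theory Submission imports Defs begin

text \<open>Relative growth optimality makes Z t = ln r^m_t a nonpositive submartingale. For such a
process Doob's maximal inequality gives \<lambda> P(inf_{t \<in> T} Z t \<le> -\<lambda>) \<le> -E Z 0 on every countable
time set T, so Z is a.s. bounded below on the nonnegative rationals; right-continuity of the
wealth paths extends the bound to all times. A lower bound r^m \<ge> c > 0 means
Y^k \<le> Y^m / c for every investor k, which cannot give Y^k a larger exponential growth rate.\<close>

lemma set_integrable_if_integrable:
  fixes f :: "'a \<Rightarrow> real"
  assumes "integrable M f" "A \<in> sets M"
  shows "set_integrable M A f"
  unfolding set_integrable_def using integrable_mult_indicator[OF assms(2,1)] by simp

lemma submartingale_borel_measurable:
  assumes "submartingale M F Z" "subalgebra M (F t)" "0 \<le> t"
  shows "Z t \<in> borel_measurable M"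
  using assms measurable_from_subalg unfolding submartingale_def by blast

lemma submartingale_set_integral_mono:
  assumes "prob_space M" "subalgebra M (F s)" "submartingale M F Z"
    and "0 \<le> s" "s \<le> t" "A \<in> sets (F s)"
  shows "(\<integral>x\<in>A. Z s x \<partial>M) \<le> (\<integral>x\<in>A. Z t x \<partial>M)"
proof -
  interpret prob_space M by fact
  interpret finite_measure_subalgebra M "F s"
    by unfold_locales (use assms(2) in auto)
  have AM: "A \<in> sets M"
    using assms(6) subalg unfolding subalgebra_def by auto
  have int_s: "integrable M (Z s)" and int_t: "integrable M (Z t)"
    and le: "AE x in M. Z s x \<le> real_cond_exp M (F s) (Z t) x"
    using assms(3-5) unfolding submartingale_def by auto
  have "(\<integral>x\<in>A. Z s x \<partial>M) \<le> (\<integral>x\<in>A. real_cond_exp M (F s) (Z t) x \<partial>M)"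
    using le set_integrable_if_integrable[OF int_s AM]
      set_integrable_if_integrable[OF real_cond_exp_int(1)[OF int_t] AM]
    by (intro set_integral_mono_AE) auto
  also have "\<dots> = (\<integral>x\<in>A. Z t x \<partial>M)"
    using real_cond_exp_intA[OF int_t assms(6)] by simp
  finally show ?thesis .
qed

lemma sets_Collect_exists_le:
  fixes Z :: "'i \<Rightarrow> 'a \<Rightarrow> real"
  assumes "countable T" "\<And>t. t \<in> T \<Longrightarrow> Z t \<in> borel_measurable M"
  shows "{x\<in>space M. \<exists>t\<in>T. Z t x \<le> c} \<in> sets M"
  using assms by (intro sets.sets_Collect_countable_Ex') measurable

locale nonpos_submartingale = prob_space M for M :: "'a measure" +
  fixes F :: "real \<Rightarrow> 'a measure" and Z :: "real \<Rightarrow> 'a \<Rightarrow> real"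
  assumes subalgebra_F: "\<And>t. 0 \<le> t \<Longrightarrow> subalgebra M (F t)"
    and sets_F_mono: "\<And>s t. 0 \<le> s \<Longrightarrow> s \<le> t \<Longrightarrow> sets (F s) \<subseteq> sets (F t)"
    and submartingale_Z: "submartingale M F Z"
    and Z_nonpos: "\<And>t x. 0 \<le> t \<Longrightarrow> x \<in> space M \<Longrightarrow> Z t x \<le> 0"
begin

lemma integrable_Z: "0 \<le> t \<Longrightarrow> integrable M (Z t)"
  using submartingale_Z unfolding submartingale_def by auto

lemma borel_measurable_Z: "0 \<le> t \<Longrightarrow> Z t \<in> borel_measurable M"
  using submartingale_Z subalgebra_F by (rule submartingale_borel_measurable)

lemma maximal_ineq_finite:
  assumes lam: "0 < lam" and S: "finite S" "S \<subseteq> {s..}"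
    and s: "0 \<le> s" and A: "A \<in> sets (F s)"
  shows "lam * measure M (A \<inter> {x\<in>space M. \<exists>t\<in>S. Z t x \<le> - lam}) \<le> - (\<integral>x\<in>A. Z s x \<partial>M)"
  using S s A
  \<comment> \<open>Each step adds the earliest time t0 of the set; the hypothesis then applies from time t0 on.\<close>
proof (induction S arbitrary: s A rule: finite_ranking_induct[where f = uminus])
  case empty
  have AM: "A \<in> sets M"
    using empty.prems subalgebra_F unfolding subalgebra_def by auto
  have "(\<integral>x\<in>A. Z s x \<partial>M) \<le> (\<integral>x\<in>A. 0 \<partial>M)"
    using set_integrable_if_integrable[OF integrable_Z AM] set_integrable_if_integrable[OF integrable_zero AM]
      Z_nonpos[OF empty.prems(2)] sets.sets_into_space[OF AM] empty.prems(2)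
    by (intro set_integral_mono) auto
  then show ?case by simp
next
  case (insert t0 S)
  let ?hit = "\<lambda>T. {x\<in>space M. \<exists>t\<in>T. Z t x \<le> - lam}"
  have t0: "s \<le> t0" "0 \<le> t0"
    using insert.prems(1,2) by auto
  have S_ge: "S \<subseteq> {t0..}"
    using insert.hyps(2) by auto
  have int_t0: "integrable M (Z t0)" and [measurable]: "Z t0 \<in> borel_measurable (F t0)"
    using submartingale_Z t0 unfolding submartingale_def by auto
  define B where "B = ?hit {t0}"
  have BF: "B \<in> sets (F t0)"
  proof -
    have "B = {x\<in>space (F t0). Z t0 x \<le> - lam}"
      using subalgebra_F[OF t0(2)] unfolding B_def subalgebra_def by auto
    also have "\<dots> \<in> sets (F t0)"
      by measurable
    finally show ?thesis .
  qed
  have AF: "A \<in> sets (F t0)"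
    using sets_F_mono[OF insert.prems(2) t0(1)] insert.prems(3) by auto
  have A1: "A \<inter> B \<in> sets M" and A2: "A - B \<in> sets M"
    using AF BF subalgebra_F[OF t0(2)] unfolding subalgebra_def by auto
  have hitS: "?hit S \<in> sets M"
    using S_ge t0 insert.hyps(1)
    by (intro sets_Collect_exists_le countable_finite borel_measurable_Z) auto
  have "A \<inter> ?hit (insert t0 S) \<subseteq> (A \<inter> B) \<union> ((A - B) \<inter> ?hit S)"
    unfolding B_def by auto
  then have "measure M (A \<inter> ?hit (insert t0 S)) \<le> measure M ((A \<inter> B) \<union> ((A - B) \<inter> ?hit S))"
    using A1 A2 hitS by (intro finite_measure_mono) auto
  also have "\<dots> \<le> measure M (A \<inter> B) + measure M ((A - B) \<inter> ?hit S)"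
    using A1 A2 hitS by (intro measure_Un_le) auto
  finally have split_hit: "lam * measure M (A \<inter> ?hit (insert t0 S)) \<le>
      lam * measure M (A \<inter> B) + lam * measure M ((A - B) \<inter> ?hit S)"
    using lam by (simp add: distrib_left[symmetric])
  have "(\<integral>x\<in>A \<inter> B. Z t0 x \<partial>M) \<le> (\<integral>x\<in>A \<inter> B. - lam \<partial>M)"
    using set_integrable_if_integrable[OF int_t0 A1]
      set_integrable_if_integrable[OF integrable_const A1]
    by (rule set_integral_mono) (auto simp: B_def)
  also have "\<dots> = - lam * measure M (A \<inter> B)"
    using A1 by (simp add: set_integral_const)
  finally have on_B: "lam * measure M (A \<inter> B) \<le> - (\<integral>x\<in>A \<inter> B. Z t0 x \<partial>M)"
    by simp
  have off_B: "lam * measure M ((A - B) \<inter> ?hit S) \<le> - (\<integral>x\<in>A - B. Z t0 x \<partial>M)"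
    using insert.IH[OF S_ge t0(2) sets.Diff[OF AF BF]] by (simp add: Int_assoc)
  have "(\<integral>x\<in>A. Z t0 x \<partial>M) = (\<integral>x\<in>(A \<inter> B) \<union> (A - B). Z t0 x \<partial>M)"
    by (simp add: Int_Diff_Un)
  also have "\<dots> = (\<integral>x\<in>A \<inter> B. Z t0 x \<partial>M) + (\<integral>x\<in>A - B. Z t0 x \<partial>M)"
    using set_integrable_if_integrable[OF int_t0 A1] set_integrable_if_integrable[OF int_t0 A2]
    by (intro set_integral_Un) auto
  finally have split_int:
    "(\<integral>x\<in>A. Z t0 x \<partial>M) = (\<integral>x\<in>A \<inter> B. Z t0 x \<partial>M) + (\<integral>x\<in>A - B. Z t0 x \<partial>M)" .
  have "(\<integral>x\<in>A. Z s x \<partial>M) \<le> (\<integral>x\<in>A. Z t0 x \<partial>M)"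
    by (rule submartingale_set_integral_mono[OF prob_space_axioms subalgebra_F[OF insert.prems(2)]
          submartingale_Z insert.prems(2) t0(1) insert.prems(3)])
  then show ?case
    using split_int split_hit on_B off_B by linarith
qed

lemma maximal_ineq:
  assumes lam: "0 < lam" and T: "countable T" "T \<subseteq> {0..}"
  shows "lam * measure M {x\<in>space M. \<exists>t\<in>T. Z t x \<le> - lam} \<le> - (\<integral>x. Z 0 x \<partial>M)"
proof -
  let ?hit = "\<lambda>S. {x\<in>space M. \<exists>t\<in>S. Z t x \<le> - lam}"
  have bound_finite: "lam * measure M (?hit S) \<le> - (\<integral>x. Z 0 x \<partial>M)" if S: "finite S" "S \<subseteq> T" for S
  proof -
    have "space M \<in> sets (F 0)"
      using subalgebra_F[of 0] unfolding subalgebra_def by (metis order_refl sets.top)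
    then have "lam * measure M (space M \<inter> ?hit S) \<le> - (\<integral>x\<in>space M. Z 0 x \<partial>M)"
      using S T(2) by (intro maximal_ineq_finite lam) auto
    moreover have "space M \<inter> ?hit S = ?hit S"
      by auto
    ultimately show ?thesis
      by (simp add: set_integral_space integrable_Z)
  qed
  show ?thesis
  proof (cases "T = {}")
    case True
    then show ?thesis
      using bound_finite[of "{}"] by simp
  next
    case False
    define E where "E n = ?hit (from_nat_into T ` {..n})" for n
    have E_sets: "range E \<subseteq> sets M"
      using from_nat_into[OF False] T unfolding E_def
      by (auto intro!: sets_Collect_exists_le borel_measurable_Z)
    have "incseq E"
      unfolding E_def incseq_def by auto
    moreover have "(\<Union>n. E n) = ?hit T"
      using from_nat_into[OF False] from_nat_into_surj[OF T(1)] unfolding E_def by fastforce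
    ultimately have "(\<lambda>n. lam * measure M (E n)) \<longlonglongrightarrow> lam * measure M (?hit T)"
      using finite_Lim_measure_incseq[OF E_sets] by (auto intro: tendsto_mult_left)
    moreover have "lam * measure M (E n) \<le> - (\<integral>x. Z 0 x \<partial>M)" for n
      using from_nat_into[OF False] unfolding E_def by (intro bound_finite) auto
    ultimately show ?thesis
      by (intro LIMSEQ_le_const2) auto
  qed
qed

lemma bounded_below:
  assumes T: "countable T" "T \<subseteq> {0..}"
  shows "AE x in M. \<exists>C. \<forall>t\<in>T. - C < Z t x"
proof -
  let ?hit = "\<lambda>lam. {x\<in>space M. \<exists>t\<in>T. Z t x \<le> - lam}"
  define N where "N = {x\<in>space M. \<forall>k::nat. \<exists>t\<in>T. Z t x \<le> - real k}"
  have hit_sets: "?hit lam \<in> sets M" for lam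
    using T by (intro sets_Collect_exists_le borel_measurable_Z) auto
  then have N_sets: "N \<in> sets M"
    unfolding N_def by (intro sets.sets_Collect_countable_All)
  have N_bound: "real (Suc k) * measure M N \<le> - (\<integral>x. Z 0 x \<partial>M)" for k
  proof -
    have "measure M N \<le> measure M (?hit (real (Suc k)))"
      by (rule finite_measure_mono[OF _ hit_sets]) (unfold N_def, blast)
    then have "real (Suc k) * measure M N \<le> real (Suc k) * measure M (?hit (real (Suc k)))"
      by (rule mult_left_mono) simp
    also have "\<dots> \<le> - (\<integral>x. Z 0 x \<partial>M)"
      using maximal_ineq[OF _ T, of "real (Suc k)"] by simp
    finally show ?thesis .
  qed
  have "measure M N \<le> 0"
  proof (rule ccontr)
    assume "\<not> measure M N \<le> 0"
    then obtain n where "- (\<integral>x. Z 0 x \<partial>M) < real n * measure M N"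
      using ex_less_of_nat_mult by (metis not_le)
    moreover have "real n * measure M N \<le> real (Suc n) * measure M N"
      by (intro mult_right_mono) auto
    ultimately show False
      using N_bound[of n] by linarith
  qed
  then have "N \<in> null_sets M"
    using N_sets measure_nonneg[of M N] by (simp add: null_sets_def emeasure_eq_measure)
  then show ?thesis
    by (rule AE_I') (auto simp: N_def not_less)
qed

end

lemma lower_bound_at_right_from_Rats:
  fixes r :: "real \<Rightarrow> real"
  assumes cont: "continuous (at_right t) r"
    and ge: "\<And>q. q \<in> \<rat> \<Longrightarrow> t < q \<Longrightarrow> c \<le> r q"
  shows "c \<le> r t"
proof (rule ccontr)
  assume "\<not> c \<le> r t"
  then have "eventually (\<lambda>x. r x < c) (at_right t)"
    using cont by (auto simp: continuous_within intro: order_tendstoD(2))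
  then obtain d where "t < d" and below: "\<And>x. t < x \<Longrightarrow> x < d \<Longrightarrow> r x < c"
    by (auto simp: eventually_at_right_field)
  then obtain q where "q \<in> \<rat>" "t < q" "q < d"
    using Rats_dense_in_real by blast
  then show False
    using below ge by (meson not_le)
qed

lemma relw_nonneg:
  assumes "\<And>j. 0 \<le> Y \<omega> t j"
  shows "0 \<le> relw Y \<omega> t k"
  using assms unfolding relw_def by (simp add: sum_nonneg)

lemma relw_le_one:
  assumes "\<And>j. 0 \<le> Y \<omega> t j"
  shows "relw Y \<omega> t k \<le> 1"
proof -
  have "Y \<omega> t k \<le> (\<Sum>j\<in>UNIV. Y \<omega> t j)"
    using assms by (intro member_le_sum) auto
  then show ?thesis
    using assms sum_nonneg[of UNIV "Y \<omega> t"] unfolding relw_def by (auto simp: divide_le_eq_1)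
qed

lemma relw_mult_le:
  assumes "\<And>j. 0 \<le> Y \<omega> t j"
  shows "relw Y \<omega> t m * Y \<omega> t k \<le> Y \<omega> t m"
proof (cases "(\<Sum>j\<in>UNIV. Y \<omega> t j) = 0")
  case True
  then show ?thesis
    using assms unfolding relw_def by simp
next
  case False
  have "relw Y \<omega> t m * Y \<omega> t k \<le> relw Y \<omega> t m * (\<Sum>j\<in>UNIV. Y \<omega> t j)"
    using assms by (intro mult_left_mono member_le_sum relw_nonneg) auto
  also have "\<dots> = Y \<omega> t m"
    using False unfolding relw_def by simp
  finally show ?thesis .
qed

lemma continuous_at_right_relw:
  assumes "\<And>j. continuous (at_right t) (\<lambda>s. Y \<omega> s j)" "(\<Sum>j\<in>UNIV. Y \<omega> t j) \<noteq> 0"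
  shows "continuous (at_right t) (\<lambda>s. relw Y \<omega> s k)"
  unfolding relw_def using assms trivial_limit_at_right_real[of t]
  by (intro continuous_divide continuous_sum) (auto simp: Lim_ident_at)

lemma growth_rate_le_if_dominated:
  assumes K: "0 < K"
    and pos: "\<And>t. 0 \<le> t \<Longrightarrow> 0 < Y \<omega> t m"
    and dom: "\<And>t. 0 \<le> t \<Longrightarrow> Y \<omega> t k \<le> K * Y \<omega> t m"
  shows "growth_rate Y \<omega> k \<le> growth_rate Y \<omega> m"
  unfolding growth_rate_def
proof (rule ereal_le_epsilon2)
  fix e :: real
  assume e: "0 < e"
  have "eventually (\<lambda>t. ereal (1 / t) * eln (Y \<omega> t k) \<le> ereal (1 / t) * eln (Y \<omega> t m) + ereal e) at_top"
    using eventually_ge_at_top[of "max 1 (\<bar>ln K\<bar> / e)"]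
  proof eventually_elim
    case (elim t)
    then have t: "0 < t" "ln K / t \<le> e"
      using e by (auto simp: field_simps abs_le_iff)
    show ?case
    proof (cases "0 < Y \<omega> t k")
      case False
      then show ?thesis
        using t unfolding eln_def by simp
    next
      case True
      have "ln (Y \<omega> t k) \<le> ln (K * Y \<omega> t m)"
        using True dom[of t] t K pos[of t] by (subst ln_le_cancel_iff) auto
      also have "\<dots> = ln K + ln (Y \<omega> t m)"
        using K pos[of t] t by (simp add: ln_mult)
      finally have "ln (Y \<omega> t k) / t \<le> ln (Y \<omega> t m) / t + ln K / t"
        using t by (simp add: add_divide_distrib[symmetric] divide_right_mono)
      then show ?thesis
        using True t pos[of t] unfolding eln_def by simp
    qed
  qed
  then have "Limsup at_top (\<lambda>t. ereal (1 / t) * eln (Y \<omega> t k))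
      \<le> Limsup at_top (\<lambda>t. ereal (1 / t) * eln (Y \<omega> t m) + ereal e)"
    by (rule Limsup_mono)
  also have "\<dots> = Limsup at_top (\<lambda>t. ereal (1 / t) * eln (Y \<omega> t m)) + ereal e"
    by (rule Limsup_add_ereal_right) auto
  finally show "Limsup at_top (\<lambda>t. ereal (1 / t) * eln (Y \<omega> t k))
      \<le> Limsup at_top (\<lambda>t. ereal (1 / t) * eln (Y \<omega> t m)) + ereal e" .
qed

lemma growth_rate_le_if_relw_bounded_below:
  assumes c: "0 < c"
    and nonneg: "\<And>t j. 0 \<le> t \<Longrightarrow> 0 \<le> Y \<omega> t j"
    and bound: "\<And>t. 0 \<le> t \<Longrightarrow> c \<le> relw Y \<omega> t m"
  shows "growth_rate Y \<omega> k \<le> growth_rate Y \<omega> m"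
proof (rule growth_rate_le_if_dominated)
  show "0 < 1 / c"
    using c by simp
  fix t :: real
  assume t: "0 \<le> t"
  have "c * Y \<omega> t k \<le> relw Y \<omega> t m * Y \<omega> t k"
    using bound[OF t] nonneg[OF t] by (rule mult_right_mono)
  also have "\<dots> \<le> Y \<omega> t m"
    using nonneg[OF t] by (rule relw_mult_le)
  finally show "Y \<omega> t k \<le> 1 / c * Y \<omega> t m"
    using c by (simp add: field_simps)
  have "Y \<omega> t m \<noteq> 0"
    using bound[OF t] c unfolding relw_def by auto
  then show "0 < Y \<omega> t m"
    using nonneg[OF t, of m] by simp
qed

lemma relw_bounded_below_if_ln_submartingale:
  fixes M :: "'a measure" and Y :: "'a \<Rightarrow> real \<Rightarrow> 'm::finite \<Rightarrow> real"
  assumes P: "prob_space M"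
    and sub: "\<And>t. 0 \<le> t \<Longrightarrow> subalgebra M (F t)"
    and mono: "\<And>s t. 0 \<le> s \<Longrightarrow> s \<le> t \<Longrightarrow> sets (F s) \<subseteq> sets (F t)"
    and sm: "submartingale M F (\<lambda>t \<omega>. ln (relw Y \<omega> t m))"
    and nonneg: "\<And>\<omega> t j. \<omega> \<in> space M \<Longrightarrow> 0 \<le> t \<Longrightarrow> 0 \<le> Y \<omega> t j"
    and right_cont: "\<And>\<omega> t j. \<omega> \<in> space M \<Longrightarrow> 0 \<le> t \<Longrightarrow> continuous (at_right t) (\<lambda>s. Y \<omega> s j)"
    and pos: "AE \<omega> in M. \<forall>t\<ge>0. 0 < Y \<omega> t m"
  shows "AE \<omega> in M. \<exists>c>0. \<forall>t\<ge>0. c \<le> relw Y \<omega> t m"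
proof -
  have ln_nonpos: "ln (relw Y \<omega> t m) \<le> 0" if "0 \<le> t" "\<omega> \<in> space M" for t \<omega>
    using relw_nonneg[of Y \<omega> t m] relw_le_one[of Y \<omega> t m] nonneg[OF that(2,1)]
    by (cases "relw Y \<omega> t m = 0") auto
  interpret nonpos_submartingale M F "\<lambda>t \<omega>. ln (relw Y \<omega> t m)"
    by (intro nonpos_submartingale.intro nonpos_submartingale_axioms.intro P sub mono sm ln_nonpos)
  have "countable (\<rat> \<inter> {0::real..})"
    using countable_rat by blast
  then have "AE \<omega> in M. \<exists>C. \<forall>q\<in>\<rat> \<inter> {0..}. - C < ln (relw Y \<omega> q m)"
    by (intro bounded_below) auto
  then show ?thesis
    using pos AE_space
  proof eventually_elim
    case (elim \<omega>)
    then obtain C where C: "\<And>q. q \<in> \<rat> \<Longrightarrow> 0 \<le> q \<Longrightarrow> - C < ln (relw Y \<omega> q m)"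
      by auto
    have \<omega>: "\<omega> \<in> space M" and pos_m: "\<And>t. 0 \<le> t \<Longrightarrow> 0 < Y \<omega> t m"
      using elim by auto
    have sum_pos: "0 < (\<Sum>j\<in>UNIV. Y \<omega> t j)" if "0 \<le> t" for t
      using pos_m[OF that] member_le_sum[of m UNIV "Y \<omega> t"] nonneg[OF \<omega> that] by fastforce
    have "exp (- C) \<le> relw Y \<omega> t m" if t: "0 \<le> t" for t
    proof (rule lower_bound_at_right_from_Rats[where r = "\<lambda>s. relw Y \<omega> s m"])
      show "continuous (at_right t) (\<lambda>s. relw Y \<omega> s m)"
        using right_cont[OF \<omega> t] sum_pos[OF t] by (intro continuous_at_right_relw) auto
      fix q :: real
      assume q: "q \<in> \<rat>" "t < q"
      have "- C < ln (relw Y \<omega> q m)"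
        using C q t by auto
      moreover have "0 < relw Y \<omega> q m"
        using pos_m sum_pos q t unfolding relw_def by auto
      ultimately show "exp (- C) \<le> relw Y \<omega> q m"
        by (metis exp_less_cancel_iff exp_ln less_imp_le)
    qed
    then show ?case
      by (intro exI[of _ "exp (- C)"]) auto
  qed
qed

lemma is_wealth_nonneg:
  assumes "is_wealth M F X y0 Ls Y" "\<omega> \<in> space M" "0 \<le> t"
  shows "0 \<le> Y \<omega> t j"
  using assms unfolding is_wealth_def by blast

lemma is_wealth_continuous_at_right:
  assumes "is_wealth M F X y0 Ls Y" "\<omega> \<in> space M" "0 \<le> t"
  shows "continuous (at_right t) (\<lambda>s. Y \<omega> s j)"
  using assms unfolding is_wealth_def cadlag_def by blast

theorem mainTheorem9:
  fixes M :: "'a measure" and F :: "real \<Rightarrow> 'a measure"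
    and X :: "'a \<Rightarrow> real \<Rightarrow> 'n::finite \<Rightarrow> real"
    and m :: "'m::finite" and L :: "('a, 'm, 'n) strategy"
    and y0 :: "'m \<Rightarrow> real" and Ls :: "'m \<Rightarrow> ('a, 'm, 'n) strategy"
    and Y :: "'a \<Rightarrow> real \<Rightarrow> 'm \<Rightarrow> real"
  assumes "prob_space M"
    and "usual_filtration M F"
    and "payoff_process M F X"
    and "CARD('m) \<ge> 2"
    and "rel_growth_optimal M F X m L"
    and "\<forall>k. 0 < y0 k"
    and "feasible M F X y0 Ls"
    and "Ls m = L"
    and "is_wealth M F X y0 Ls Y"
  shows "(AE \<omega> in M. 0 < (INF t\<in>{0..}. relw Y \<omega> t m)) \<and>
         (\<forall>k. AE \<omega> in M. growth_rate Y \<omega> m \<ge> growth_rate Y \<omega> k)"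
proof -
  have sub: "\<And>t. 0 \<le> t \<Longrightarrow> subalgebra M (F t)"
    and mono: "\<And>s t. 0 \<le> s \<Longrightarrow> s \<le> t \<Longrightarrow> sets (F s) \<subseteq> sets (F t)"
    using assms(2) unfolding usual_filtration_def by blast+
  have pos: "AE \<omega> in M. \<forall>t\<ge>0. 0 < Y \<omega> t m"
    and sm: "submartingale M F (\<lambda>t \<omega>. ln (relw Y \<omega> t m))"
    using assms(5-9) unfolding rel_growth_optimal_def by auto
  note nonneg = is_wealth_nonneg[OF assms(9)]
  have bound: "AE \<omega> in M. \<exists>c>0. \<forall>t\<ge>0. c \<le> relw Y \<omega> t m"
    by (rule relw_bounded_below_if_ln_submartingale[OF assms(1) sub mono sm nonneg
          is_wealth_continuous_at_right[OF assms(9)] pos])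
  show ?thesis
  proof (intro conjI allI)
    show "AE \<omega> in M. 0 < (INF t\<in>{0..}. relw Y \<omega> t m)"
      using bound by eventually_elim (auto intro: less_le_trans cINF_greatest)
    fix k
    show "AE \<omega> in M. growth_rate Y \<omega> m \<ge> growth_rate Y \<omega> k"
      using bound AE_space by eventually_elim (auto intro: growth_rate_le_if_relw_bounded_below nonneg)
  qed
qed

end
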